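(* Let $G$ be a regular simple graph on $n$ vertices that is isomorphic neither to the empty graph $E_n$ (no edges) nor to the complete graph $K_n$. Then for every integer $k$ with $2\le k\le n-2$, the token graph $F_k(G)$ is non-regular.
   Context: For a simple graph $G=(V,E)$ on $n$ vertices and an integer $1\le k<n$, the $k$-token graph $F_k(G)$ is the graph whose vertices are all $k$-element subsets of $V$, two such subsets $A,B$ being adjacent whenever their symmetric difference $A\triangle B$ is a pair $\{a,b\}$ with $a$ adjacent to $b$ in $G$. *)

theory Defs
  imports Main
begin

definition simple_graph :: "'a set \<Rightarrow> ('a \<Rightarrow> 'a \<Rightarrow> bool) \<Rightarrow> bool" where
  "simple_graph V E \<longleftrightarrow> finite V \<and> (\<forall>x y. E x y \<longrightarrow> x \<in> V \<and> y \<in> V) \<and>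
     (\<forall>x y. E x y \<longrightarrow> E y x) \<and> (\<forall>x. \<not> E x x)"

definition degree :: "'a set \<Rightarrow> ('a \<Rightarrow> 'a \<Rightarrow> bool) \<Rightarrow> 'a \<Rightarrow> nat" where
  "degree V E v = card {w \<in> V. E v w}"

definition regular :: "'a set \<Rightarrow> ('a \<Rightarrow> 'a \<Rightarrow> bool) \<Rightarrow> bool" where
  "regular V E \<longleftrightarrow> (\<exists>d. \<forall>v\<in>V. degree V E v = d)"

definition edgeless :: "'a set \<Rightarrow> ('a \<Rightarrow> 'a \<Rightarrow> bool) \<Rightarrow> bool" where
  "edgeless V E \<longleftrightarrow> (\<forall>x\<in>V. \<forall>y\<in>V. \<not> E x y)"

definition complete :: "'a set \<Rightarrow> ('a \<Rightarrow> 'a \<Rightarrow> bool) \<Rightarrow> bool" where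
  "complete V E \<longleftrightarrow> (\<forall>x\<in>V. \<forall>y\<in>V. x \<noteq> y \<longrightarrow> E x y)"

definition token_vertices :: "'a set \<Rightarrow> nat \<Rightarrow> 'a set set" where
  "token_vertices V k = {A. A \<subseteq> V \<and> card A = k}"

definition token_adj :: "('a \<Rightarrow> 'a \<Rightarrow> bool) \<Rightarrow> 'a set \<Rightarrow> 'a set \<Rightarrow> bool" where
  "token_adj E A B \<longleftrightarrow> (\<exists>a b. E a b \<and> (A - B) \<union> (B - A) = {a, b})"

end

theory Submission
  imports Defs
begin

text \<open>The degree of a $k$-set $A$ in $F_k(G)$ is the number of edges of $G$ leaving $A$. Adding a
  vertex $x$ to a $(k-1)$-set $S \not\ni x$ changes this count by $\deg x - 2|N(x) \cap S|$, so
  if $G$ and $F_k(G)$ are both regular, any two vertices $x, y$ have equally many neighbours in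
  every $(k-1)$-subset of $V - \{x, y\}$. As $0 < k - 1 < |V - \{x, y\}|$, exchanging one element
  of such a subset shows that $x$ and $y$ have the same neighbours in $V - \{x, y\}$; a graph in
  which all pairs of vertices are twins in this sense is edgeless or complete.\<close>

definition neighbours :: "'a set \<Rightarrow> ('a \<Rightarrow> 'a \<Rightarrow> bool) \<Rightarrow> 'a \<Rightarrow> 'a set" where
  "neighbours V E x = {w \<in> V. E x w}"

lemma degree_eq_card_neighbours: "degree V E x = card (neighbours V E x)"
  by (simp add: degree_def neighbours_def)

lemma token_adj_iff_swap:
  assumes G: "simple_graph V E" and fin: "finite A" "finite B" and card_eq: "card A = card B"
  shows "token_adj E A B \<longleftrightarrow> (\<exists>a\<in>A. \<exists>b. b \<notin> A \<and> E a b \<and> B = insert b (A - {a}))"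
proof
  assume "token_adj E A B"
  then obtain a b where ab: "E a b" and D: "(A - B) \<union> (B - A) = {a, b}"
    unfolding token_adj_def by blast
  have "a \<noteq> b" using ab G by (auto simp: simple_graph_def)
  have "card (A - B) + card (B - A) = card ((A - B) \<union> (B - A))"
    using fin by (intro card_Un_disjoint[symmetric]) auto
  also have "\<dots> = 2" using D \<open>a \<noteq> b\<close> by simp
  finally have "card (A - B) + card (B - A) = 2" .
  moreover have "card (A - B) = card (B - A)"
    using fin card_eq by (simp add: card_Diff_subset_Int Int_commute)
  ultimately have "card (A - B) = 1" "card (B - A) = 1" by simp_all
  then obtain a' b' where a'b': "A - B = {a'}" "B - A = {b'}"
    by (metis card_1_singletonE)
  have "{a', b'} = {a, b}" using D a'b' by blast
  then have "E a' b'" using ab G by (auto simp: simple_graph_def doubleton_eq_iff)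
  with a'b' show "\<exists>a\<in>A. \<exists>b. b \<notin> A \<and> E a b \<and> B = insert b (A - {a})"
    by (intro bexI[of _ a'] exI[of _ b']) blast+
next
  assume "\<exists>a\<in>A. \<exists>b. b \<notin> A \<and> E a b \<and> B = insert b (A - {a})"
  then obtain a b where "a \<in> A" "b \<notin> A" "E a b" "B = insert b (A - {a})" by blast
  then show "token_adj E A B"
    unfolding token_adj_def by (intro exI[of _ a] exI[of _ b]) auto
qed

lemma card_swap:
  assumes "finite A" "a \<in> A" "b \<notin> A"
  shows "card (insert b (A - {a})) = card A"
proof -
  have "card (insert b (A - {a})) = Suc (card (A - {a}))"
    using assms by (intro card_insert_disjoint) auto
  also have "\<dots> = card A" using assms by (intro card_Suc_Diff1)
  finally show ?thesis .
qed

lemma inj_on_swap: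
  "inj_on (\<lambda>(a, b). insert b (A - {a})) (SIGMA a:A. X a - A)"
proof (rule inj_onI, clarsimp)
  fix a b a' b'
  assume "a \<in> A" "b \<notin> A" "a' \<in> A" "b' \<notin> A" and eq: "insert b (A - {a}) = insert b' (A - {a'})"
  then have "A - insert b (A - {a}) = {a}" "A - insert b' (A - {a'}) = {a'}" by auto
  moreover have "insert b (A - {a}) - A = {b}" "insert b' (A - {a'}) - A = {b'}"
    using \<open>b \<notin> A\<close> \<open>b' \<notin> A\<close> by auto
  ultimately show "a = a' \<and> b = b'" using eq by simp
qed

lemma degree_token_graph:
  assumes G: "simple_graph V E" and "A \<subseteq> V" "card A = k"
  shows "degree (token_vertices V k) (token_adj E) A = (\<Sum>a\<in>A. card (neighbours V E a - A))"
proof -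
  have fin: "finite V" "finite A" using G \<open>A \<subseteq> V\<close> by (auto simp: simple_graph_def finite_subset)
  let ?swap = "\<lambda>(a, b). insert b (A - {a})"
  let ?P = "SIGMA a:A. neighbours V E a - A"
  have "{B \<in> token_vertices V k. token_adj E A B} = ?swap ` ?P"
  proof (intro equalityI subsetI)
    fix B assume "B \<in> {B \<in> token_vertices V k. token_adj E A B}"
    then have "B \<subseteq> V" "card B = k" "token_adj E A B" by (auto simp: token_vertices_def)
    moreover from this have "finite B" using fin finite_subset by blast
    ultimately obtain a b where "a \<in> A" "b \<notin> A" "E a b" "B = insert b (A - {a})"
      using token_adj_iff_swap[OF G fin(2)] \<open>card A = k\<close> by blast
    moreover have "b \<in> V" using G \<open>E a b\<close> by (auto simp: simple_graph_def)
    ultimately show "B \<in> ?swap ` ?P" by (force simp: neighbours_def)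
  next
    fix B assume "B \<in> ?swap ` ?P"
    then obtain a b where ab: "a \<in> A" "b \<in> V" "b \<notin> A" "E a b" and B: "B = insert b (A - {a})"
      by (auto simp: neighbours_def)
    have "B \<subseteq> V" "card B = k" using B ab \<open>A \<subseteq> V\<close> card_swap[OF fin(2) ab(1,3)] \<open>card A = k\<close> by auto
    moreover have "token_adj E A B"
      using token_adj_iff_swap[OF G fin(2) _, of B] B ab fin(2) \<open>card B = k\<close> \<open>card A = k\<close>
      by blast
    ultimately show "B \<in> {B \<in> token_vertices V k. token_adj E A B}" by (simp add: token_vertices_def)
  qed
  then have "degree (token_vertices V k) (token_adj E) A = card ?P"
    by (simp add: degree_def card_image inj_on_swap)
  also have "\<dots> = (\<Sum>a\<in>A. card (neighbours V E a - A))"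
    using fin by (intro card_SigmaI) (auto simp: neighbours_def)
  finally show ?thesis .
qed

lemma sum_card_neighbours_Diff_insert:
  assumes G: "simple_graph V E" and "finite S" "x \<notin> S"
  shows "(\<Sum>a\<in>insert x S. card (neighbours V E a - insert x S)) + 2 * card (neighbours V E x \<inter> S)
       = (\<Sum>a\<in>S. card (neighbours V E a - S)) + card (neighbours V E x)"
proof -
  have fin: "finite V" and sym: "\<And>u v. E u v \<Longrightarrow> E v u" and irr: "\<And>u. \<not> E u u"
    and EV: "\<And>u v. E u v \<Longrightarrow> u \<in> V \<and> v \<in> V"
    using G unfolding simple_graph_def by auto
  let ?N = "neighbours V E"
  have drop_x: "card (?N a - S) = card (?N a - insert x S) + of_bool (E a x)" for a
  proof (cases "E a x")
    case True
    then have "?N a - S = insert x (?N a - insert x S)"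
      using EV \<open>x \<notin> S\<close> unfolding neighbours_def by blast
    moreover have "finite (?N a - insert x S)" using fin by (simp add: neighbours_def)
    ultimately have "card (?N a - S) = Suc (card (?N a - insert x S))"
      by (metis card_insert_disjoint Diff_iff insertI1)
    then show ?thesis using True by simp
  next
    case False
    then have "?N a - S = ?N a - insert x S" unfolding neighbours_def by blast
    \<comment> \<open>Used as a rewrite rule, this set equation makes the simplifier loop.\<close>
    then show ?thesis using False by (metis add_0_right of_bool_eq(1))
  qed
  have "(\<Sum>a\<in>S. card (?N a - S))
      = (\<Sum>a\<in>S. card (?N a - insert x S)) + (\<Sum>a\<in>S. of_bool (E a x) :: nat)"
    unfolding drop_x by (rule sum.distrib)
  moreover have "(\<Sum>a\<in>S. of_bool (E a x) :: nat) = card (?N x \<inter> S)"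
  proof -
    have "S \<inter> {a. E a x} = ?N x \<inter> S" unfolding neighbours_def using sym EV by blast
    then show ?thesis using \<open>finite S\<close> by simp
  qed
  moreover have "(\<Sum>a\<in>insert x S. card (?N a - insert x S))
      = card (?N x - insert x S) + (\<Sum>a\<in>S. card (?N a - insert x S))"
    using \<open>finite S\<close> \<open>x \<notin> S\<close> by (rule sum.insert)
  moreover have "card (?N x - insert x S) = card (?N x - S)"
    using irr unfolding neighbours_def by (intro arg_cong[where f = card]) blast
  moreover have "card (?N x) = card (?N x \<inter> S) + card (?N x - S)"
    using fin by (intro card_Int_Diff) (simp add: neighbours_def)
  ultimately show ?thesis by linarith
qed

lemma degree_token_graph_insert:
  assumes G: "simple_graph V E" and "S \<subseteq> V" "x \<in> V" "x \<notin> S" "card S + 1 = k"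
  shows "degree (token_vertices V k) (token_adj E) (insert x S) + 2 * card (neighbours V E x \<inter> S)
       = (\<Sum>a\<in>S. card (neighbours V E a - S)) + degree V E x"
proof -
  have "finite S" using G \<open>S \<subseteq> V\<close> by (auto simp: simple_graph_def finite_subset)
  then have card_insert: "card (insert x S) = k" using assms by simp
  show ?thesis
    using degree_token_graph[OF G _ card_insert] sum_card_neighbours_Diff_insert[OF G \<open>finite S\<close> \<open>x \<notin> S\<close>]
      assms by (simp add: degree_eq_card_neighbours)
qed

lemma regular_token_graph_card_common_neighbours:
  assumes G: "simple_graph V E" and "regular V E" and "regular (token_vertices V k) (token_adj E)"
    and "x \<in> V" "y \<in> V" "S \<subseteq> V - {x, y}" "card S + 1 = k"
  shows "card (neighbours V E x \<inter> S) = card (neighbours V E y \<inter> S)"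
proof -
  obtain d where d: "\<forall>v\<in>V. degree V E v = d" using \<open>regular V E\<close> by (auto simp: regular_def)
  obtain dF where dF: "\<forall>A\<in>token_vertices V k. degree (token_vertices V k) (token_adj E) A = dF"
    using \<open>regular (token_vertices V k) (token_adj E)\<close> by (auto simp: regular_def)
  have "finite S" using G assms(6) by (auto simp: simple_graph_def finite_subset)
  moreover have "x \<notin> S" "y \<notin> S" using assms(6) by auto
  ultimately have "insert x S \<in> token_vertices V k" "insert y S \<in> token_vertices V k"
    using assms by (auto simp: token_vertices_def)
  then have "degree (token_vertices V k) (token_adj E) (insert x S) = dF"
    "degree (token_vertices V k) (token_adj E) (insert y S) = dF"
    using dF by blast+
  moreover have "degree V E x = d" "degree V E y = d" using d assms(4,5) by blast+
  moreover have "S \<subseteq> V" using assms(6) by blast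
  ultimately show ?thesis
    using degree_token_graph_insert[OF G _ \<open>x \<in> V\<close> \<open>x \<notin> S\<close> \<open>card S + 1 = k\<close>]
      degree_token_graph_insert[OF G _ \<open>y \<in> V\<close> \<open>y \<notin> S\<close> \<open>card S + 1 = k\<close>]
    by linarith
qed

lemma card_Int_insert_right:
  "finite R \<Longrightarrow> u \<notin> R \<Longrightarrow> card (X \<inter> insert u R) = card (X \<inter> R) + of_bool (u \<in> X)"
  by (cases "u \<in> X") (simp_all add: Int_insert_right)

lemma of_bool_exchange_if_card_Int_insert_eq:
  assumes "finite R" "u \<notin> R" "v \<notin> R"
    and "card (X \<inter> insert u R) = card (Y \<inter> insert u R)"
    and "card (X \<inter> insert v R) = card (Y \<inter> insert v R)"
  shows "of_bool (u \<in> X) + of_bool (v \<in> Y) = (of_bool (u \<in> Y) + of_bool (v \<in> X) :: nat)"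
  using assms(4,5) card_Int_insert_right[OF assms(1,2), of X] card_Int_insert_right[OF assms(1,2), of Y]
    card_Int_insert_right[OF assms(1,3), of X] card_Int_insert_right[OF assms(1,3), of Y]
  by linarith

lemma Int_subset_if_card_Int_eq_on_subsets:
  assumes "finite W" "0 < m" "m < card W"
    and eq: "\<And>S. S \<subseteq> W \<Longrightarrow> card S = m \<Longrightarrow> card (X \<inter> S) = card (Y \<inter> S)"
  shows "X \<inter> W \<subseteq> Y"
proof
  fix u assume u: "u \<in> X \<inter> W"
  show "u \<in> Y"
  proof (rule ccontr)
    assume "u \<notin> Y"
    have "v \<in> X - Y" if "v \<in> W" for v
    proof (cases "v = u")
      case True
      with u \<open>u \<notin> Y\<close> show ?thesis by blast
    next
      case False
      have "card (W - {u, v}) = card W - 2"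
        using u \<open>v \<in> W\<close> False \<open>finite W\<close> by (subst card_Diff_subset) auto
      then have "m - 1 \<le> card (W - {u, v})" using \<open>m < card W\<close> by linarith
      then obtain R where R: "R \<subseteq> W - {u, v}" "card R = m - 1" "finite R"
        by (rule obtain_subset_with_card_n)
      have "u \<notin> R" "v \<notin> R" using R(1) by auto
      then have "card (insert u R) = m" "card (insert v R) = m" using R \<open>0 < m\<close> by auto
      moreover have "insert u R \<subseteq> W" "insert v R \<subseteq> W" using R(1) u \<open>v \<in> W\<close> by auto
      ultimately have "of_bool (u \<in> X) + of_bool (v \<in> Y) = (of_bool (u \<in> Y) + of_bool (v \<in> X) :: nat)"
        by (intro of_bool_exchange_if_card_Int_insert_eq[OF R(3) \<open>u \<notin> R\<close> \<open>v \<notin> R\<close>] eq)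
      then show ?thesis using u \<open>u \<notin> Y\<close> by (cases "v \<in> X"; cases "v \<in> Y") auto
    qed
    moreover obtain S where "S \<subseteq> W" "card S = m" "finite S"
      by (rule obtain_subset_with_card_n[OF less_imp_le[OF \<open>m < card W\<close>]])
    ultimately have "X \<inter> S = S" "Y \<inter> S = {}" by auto
    then show False using eq[OF \<open>S \<subseteq> W\<close> \<open>card S = m\<close>] \<open>card S = m\<close> \<open>0 < m\<close> by simp
  qed
qed

lemma regular_token_graph_twins:
  assumes G: "simple_graph V E" and "regular V E" and "regular (token_vertices V k) (token_adj E)"
    and "2 \<le> k" "k + 2 \<le> card V" and "x \<in> V" "y \<in> V" "u \<in> V - {x, y}"
  shows "E x u \<longleftrightarrow> E y u"
proof -
  let ?W = "V - {x, y}"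
  have "finite ?W" using G by (simp add: simple_graph_def)
  have "card {x, y} \<le> 2" by (simp add: card_insert_if)
  then have "card V - 2 \<le> card ?W" using diff_card_le_card_Diff[of "{x, y}" V] by simp
  then have "0 < k - 1" "k - 1 < card ?W" using \<open>2 \<le> k\<close> \<open>k + 2 \<le> card V\<close> by linarith+
  moreover have "card (neighbours V E x \<inter> S) = card (neighbours V E y \<inter> S)"
    if "S \<subseteq> ?W" "card S = k - 1" for S
    using regular_token_graph_card_common_neighbours[OF assms(1-3) \<open>x \<in> V\<close> \<open>y \<in> V\<close> that(1)]
      that(2) \<open>2 \<le> k\<close> by simp
  ultimately have "neighbours V E x \<inter> ?W \<subseteq> neighbours V E y"
    "neighbours V E y \<inter> ?W \<subseteq> neighbours V E x"
    using Int_subset_if_card_Int_eq_on_subsets[OF \<open>finite ?W\<close>] by metis+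
  then show ?thesis using \<open>u \<in> ?W\<close> by (auto simp: neighbours_def)
qed

lemma edgeless_or_complete_if_twins:
  assumes G: "simple_graph V E"
    and twins: "\<And>x y u. x \<in> V \<Longrightarrow> y \<in> V \<Longrightarrow> u \<in> V - {x, y} \<Longrightarrow> E x u \<longleftrightarrow> E y u"
  shows "edgeless V E \<or> complete V E"
proof (cases "edgeless V E")
  case False
  then obtain x y where "x \<in> V" "y \<in> V" "E x y" unfolding edgeless_def by blast
  have sym: "\<And>u v. E u v \<Longrightarrow> E v u" and irr: "\<And>u. \<not> E u u"
    using G unfolding simple_graph_def by auto
  have adj_x: "E z x" if "z \<in> V" "z \<noteq> x" for z
  proof (cases "z = y")
    case True
    then show ?thesis using sym \<open>E x y\<close> by blast
  next
    case False
    have "x \<noteq> y" using irr \<open>E x y\<close> by blast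
    then have "E y x \<longleftrightarrow> E z x" using twins \<open>x \<in> V\<close> \<open>y \<in> V\<close> that False by blast
    then show ?thesis using sym \<open>E x y\<close> by blast
  qed
  have "E u v" if "u \<in> V" "v \<in> V" "u \<noteq> v" for u v
  proof -
    consider "u = x" | "v = x" | "u \<noteq> x" "v \<noteq> x" by blast
    then show ?thesis
    proof cases
      case 1
      then show ?thesis using adj_x[of v] sym that by blast
    next
      case 2
      then show ?thesis using adj_x[of u] that by blast
    next
      case 3
      then have "E x v \<longleftrightarrow> E u v" using twins \<open>x \<in> V\<close> that by blast
      then show ?thesis using adj_x[of v] sym that 3 by blast
    qed
  qed
  then show ?thesis unfolding complete_def by blast
qed simp

theorem theorem3:
  fixes V :: "'a set" and E :: "'a \<Rightarrow> 'a \<Rightarrow> bool" and k :: nat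
  assumes "simple_graph V E"
    and "regular V E"
    and "\<not> edgeless V E"
    and "\<not> complete V E"
    and "2 \<le> k" and "k + 2 \<le> card V"
  shows "\<not> regular (token_vertices V k) (token_adj E)"
proof
  assume "regular (token_vertices V k) (token_adj E)"
  then have "edgeless V E \<or> complete V E"
    using edgeless_or_complete_if_twins[OF assms(1)] regular_token_graph_twins[OF assms(1,2) _ assms(5,6)]
    by blast
  with assms(3,4) show False by blast
qed

end
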